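(* Let $G$ be a graph such that two or more edges join vertices $v$ and $w$. If $e$ is one of these edges, then $\mathrm{usp}(G\backslash e)\geq \mathrm{usp}(G)$ and $\mathrm{sp}(G\backslash e)\leq \mathrm{sp}(G)$. Moreover, if three or more edges join $v$ and $w$, then $\mathrm{usp}(G\backslash e)=\mathrm{usp}(G)$ and $\mathrm{sp}(G\backslash e)=\mathrm{sp}(G)$.
   Context: All graphs are finite, have at least one vertex, have no loops, and may have multiple (parallel) edges. $G\backslash e$ denotes deletion of edge $e$. A unique shortest path is a shortest $u$–$v$ path $P$ such that every $u$–$v$ path with the same number of vertices is identical to $P$, where two paths with different edge sequences are different even if their vertex sequences agree; a single vertex is a unique shortest path. The parade number $\mathrm{usp}(G)$ is the largest number of vertices of a unique shortest path in $G$. The spectator number is $\mathrm{sp}(G)=|V(G)|-\mathrm{usp}(G)$. *)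

theory Defs
  imports Main
begin

text \<open>A finite multigraph is given by a vertex set V, an edge set E, and an endpoint
map ends; each edge has exactly two distinct endpoints (no loops), parallel edges allowed.\<close>

definition multigraph :: "'v set \<Rightarrow> 'e set \<Rightarrow> ('e \<Rightarrow> 'v set) \<Rightarrow> bool" where
  "multigraph V E ends \<longleftrightarrow> finite V \<and> V \<noteq> {} \<and> finite E \<and>
     (\<forall>e\<in>E. ends e \<subseteq> V \<and> card (ends e) = 2)"

definition is_path :: "'v set \<Rightarrow> 'e set \<Rightarrow> ('e \<Rightarrow> 'v set) \<Rightarrow> 'v list \<Rightarrow> 'e list \<Rightarrow> bool" where
  "is_path V E ends vs es \<longleftrightarrow> vs \<noteq> [] \<and> distinct vs \<and> set vs \<subseteq> V \<and>
     length es + 1 = length vs \<and>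
     (\<forall>i<length es. es ! i \<in> E \<and> ends (es ! i) = {vs ! i, vs ! Suc i})"

definition is_usp :: "'v set \<Rightarrow> 'e set \<Rightarrow> ('e \<Rightarrow> 'v set) \<Rightarrow> 'v list \<Rightarrow> 'e list \<Rightarrow> bool" where
  "is_usp V E ends vs es \<longleftrightarrow> is_path V E ends vs es \<and>
     (\<forall>vs' es'. is_path V E ends vs' es' \<and> hd vs' = hd vs \<and> last vs' = last vs \<longrightarrow>
        length vs \<le> length vs' \<and> (length vs' = length vs \<longrightarrow> vs' = vs \<and> es' = es))"

definition usp :: "'v set \<Rightarrow> 'e set \<Rightarrow> ('e \<Rightarrow> 'v set) \<Rightarrow> nat" where
  "usp V E ends = Max {length vs | vs es. is_usp V E ends vs es}"

definition sp :: "'v set \<Rightarrow> 'e set \<Rightarrow> ('e \<Rightarrow> 'v set) \<Rightarrow> nat" where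
  "sp V E ends = card V - usp V E ends"

end

theory Submission
  imports Defs
begin

text \<open>A unique shortest path uses no edge that has a parallel copy: swapping that edge for
the copy yields a different path through the same vertices. Hence deleting one of at least two
parallel edges destroys no unique shortest path. With at least three, two copies survive the
deletion, so unique shortest paths of the smaller graph avoid them too, and any competing path
through the deleted edge can be rerouted along a surviving copy; thus no unique shortest path
is created either.\<close>

lemma card_Diff_singleton_ge:
  assumes "x \<in> A" "Suc n \<le> card A"
  shows "n \<le> card (A - {x})"
proof -
  have "finite A" using assms(2) card.infinite by force
  then show ?thesis using assms by (simp add: card_Diff_singleton)
qed

lemma card_ge_2_obtain_distinct:
  assumes "2 \<le> card A"
  obtains a b where "a \<in> A" "b \<in> A" "a \<noteq> b"
proof -
  have "finite A" using assms card.infinite by force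
  with assms have "\<not> (\<forall>a\<in>A. \<forall>b\<in>A. a = b)" by (auto simp: card_le_Suc0_iff_eq[symmetric])
  then show ?thesis using that by blast
qed

lemma is_path_edges_subset:
  assumes "is_path V E ends vs es"
  shows "set es \<subseteq> E"
  using assms unfolding is_path_def by (auto simp: set_conv_nth)

lemma is_path_restrict_edges:
  assumes "is_path V E ends vs es" "set es \<subseteq> E'"
  shows "is_path V E' ends vs es"
  using assms unfolding is_path_def by auto

lemma is_path_mono_edges:
  assumes "is_path V E' ends vs es" "E' \<subseteq> E"
  shows "is_path V E ends vs es"
  using assms unfolding is_path_def by blast

lemma is_path_reroute_edge:
  assumes "is_path V E ends vs es" "g \<in> E - {e}" "ends g = ends e"
  shows "is_path V (E - {e}) ends vs (map (\<lambda>x. if x = e then g else x) es)"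
  using assms unfolding is_path_def by auto

lemma is_usp_is_path: "is_usp V E ends vs es \<Longrightarrow> is_path V E ends vs es"
  unfolding is_usp_def by simp

lemma is_usp_restrict_edges:
  assumes "is_usp V E ends vs es" "set es \<subseteq> E'" "E' \<subseteq> E"
  shows "is_usp V E' ends vs es"
proof -
  have "is_path V E ends vs' es'" if "is_path V E' ends vs' es'" for vs' es'
    using that assms(3) by (rule is_path_mono_edges)
  moreover have "is_path V E' ends vs es"
    using is_path_restrict_edges[OF is_usp_is_path[OF assms(1)] assms(2)] .
  ultimately show ?thesis using assms(1) unfolding is_usp_def by blast
qed

lemma is_usp_edge_has_no_parallel:
  assumes "is_usp V E ends vs es" "f \<in> set es" "g \<in> E" "ends g = ends f"
  shows "g = f"
proof -
  obtain i where i: "i < length es" "es ! i = f" using assms(2) by (auto simp: in_set_conv_nth)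
  have "is_path V E ends vs (es[i := g])"
    using assms i unfolding is_usp_def is_path_def by (auto simp: nth_list_update)
  then have "es[i := g] = es" using assms(1) unfolding is_usp_def by blast
  then show ?thesis using i by (metis nth_list_update_eq)
qed

lemma is_usp_insert_parallel_edge:
  assumes usp: "is_usp V (E - {e}) ends vs es"
    and g: "g \<in> E - {e}" "ends g = ends e" "g \<notin> set es"
  shows "is_usp V E ends vs es"
  unfolding is_usp_def
proof (intro conjI allI impI)
  show "is_path V E ends vs es" using is_path_mono_edges[OF is_usp_is_path[OF usp]] by blast
  fix vs' es'
  assume "is_path V E ends vs' es' \<and> hd vs' = hd vs \<and> last vs' = last vs"
  then have path: "is_path V E ends vs' es'" and ends: "hd vs' = hd vs" "last vs' = last vs"
    by blast+
  let ?reroute = "\<lambda>x. if x = e then g else x"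
  have "is_path V (E - {e}) ends vs' (map ?reroute es')"
    using is_path_reroute_edge[OF path g(1,2)] .
  then have "length vs \<le> length vs' \<and>
      (length vs' = length vs \<longrightarrow> vs' = vs \<and> map ?reroute es' = es)"
    using usp ends unfolding is_usp_def by blast
  then show "length vs \<le> length vs'" and "length vs' = length vs \<Longrightarrow> vs' = vs"
    by blast+
  assume "length vs' = length vs"
  with \<open>length vs \<le> length vs' \<and> _\<close> have rerouted: "map ?reroute es' = es" by blast
  then have "e \<notin> set es'" using g(3) by force
  then have "map ?reroute es' = es'" by (induction es') auto
  then show "es' = es" using rerouted by simp
qed

lemma is_usp_singleton:
  assumes "x \<in> V"
  shows "is_usp V E ends [x] []"
proof -
  have "vs' = [x] \<and> es' = []"
    if path: "is_path V E ends vs' es'" and ends: "hd vs' = x" "last vs' = x" for vs' es'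
  proof -
    have "distinct vs'" "vs' \<noteq> []" "length es' + 1 = length vs'"
      using path unfolding is_path_def by auto
    then obtain ys where vs': "vs' = x # ys" "x \<notin> set ys" "length es' = length ys"
      using ends(1) by (cases vs') auto
    have "ys = []"
    proof (rule ccontr)
      assume "ys \<noteq> []"
      then have "last ys \<in> set ys" "last ys = x" using ends(2) vs'(1) by auto
      with vs'(2) show False by simp
    qed
    then show ?thesis using vs' by simp
  qed
  then show ?thesis using assms unfolding is_usp_def is_path_def by auto
qed

lemma usp_length_le_card:
  assumes "finite V" "is_usp V E ends vs es"
  shows "length vs \<le> card V"
proof -
  have "distinct vs" "set vs \<subseteq> V"
    using is_usp_is_path[OF assms(2)] unfolding is_path_def by auto
  then show ?thesis using assms(1) by (metis card_mono distinct_card)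
qed

lemma usp_mono:
  assumes "finite V" "V \<noteq> {}"
    and usp_preserved: "\<And>vs es. is_usp V E ends vs es \<Longrightarrow> is_usp V E' ends vs es"
  shows "usp V E ends \<le> usp V E' ends"
proof -
  let ?lengths = "\<lambda>E. {length vs | vs es. is_usp V E ends vs es}"
  obtain x where x: "x \<in> V" using assms(2) by blast
  have nonempty: "?lengths E \<noteq> {}" using is_usp_singleton[OF x] by blast
  have subset: "?lengths E \<subseteq> ?lengths E'" using usp_preserved by blast
  have "?lengths E' \<subseteq> {..card V}" using usp_length_le_card[OF assms(1)] by auto
  then have "finite (?lengths E')" using finite_subset by blast
  then show ?thesis unfolding usp_def by (rule Max_mono[OF subset nonempty])
qed

lemma usp_le_usp_delete_parallel_edge:
  assumes "finite V" "V \<noteq> {}" "g \<in> E - {e}" "ends g = ends e"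
  shows "usp V E ends \<le> usp V (E - {e}) ends"
proof (rule usp_mono[OF assms(1,2)])
  fix vs es assume usp: "is_usp V E ends vs es"
  have "e \<notin> set es"
  proof
    assume "e \<in> set es"
    with assms(3,4) have "g = e" using is_usp_edge_has_no_parallel[OF usp] by blast
    with assms(3) show False by blast
  qed
  moreover have "set es \<subseteq> E" using is_path_edges_subset[OF is_usp_is_path[OF usp]] .
  ultimately have "set es \<subseteq> E - {e}" by blast
  then show "is_usp V (E - {e}) ends vs es" by (rule is_usp_restrict_edges[OF usp _ Diff_subset])
qed

lemma usp_delete_parallel_edge_le_usp:
  assumes "finite V" "V \<noteq> {}" "g \<in> E - {e}" "g' \<in> E - {e}" "g \<noteq> g'"
    "ends g = ends e" "ends g' = ends e"
  shows "usp V (E - {e}) ends \<le> usp V E ends"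
proof (rule usp_mono[OF assms(1,2)])
  fix vs es assume usp: "is_usp V (E - {e}) ends vs es"
  have "g \<notin> set es" using is_usp_edge_has_no_parallel[OF usp _ assms(4)] assms(5-7) by metis
  then show "is_usp V E ends vs es" using is_usp_insert_parallel_edge[OF usp assms(3,6)] by blast
qed

theorem lemma6p8:
  fixes V :: "'v set" and E :: "'e set" and ends :: "'e \<Rightarrow> 'v set"
  assumes "multigraph V E ends"
    and "card {f \<in> E. ends f = {v, w}} \<ge> 2"
    and "e \<in> E" and "ends e = {v, w}"
  shows "usp V (E - {e}) ends \<ge> usp V E ends \<and> sp V (E - {e}) ends \<le> sp V E ends \<and>
    (card {f \<in> E. ends f = {v, w}} \<ge> 3 \<longrightarrow>
       usp V (E - {e}) ends = usp V E ends \<and> sp V (E - {e}) ends = sp V E ends)"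
proof -
  let ?parallel = "{f \<in> E. ends f = {v, w}} - {e}"
  have V: "finite V" "V \<noteq> {}" using assms(1) unfolding multigraph_def by auto
  have e: "e \<in> {f \<in> E. ends f = {v, w}}" using assms(3,4) by blast
  have "1 \<le> card ?parallel" using card_Diff_singleton_ge[OF e] assms(2) by simp
  then obtain g where "g \<in> ?parallel" by (metis card.empty ex_in_conv not_one_le_zero)
  then have "g \<in> E - {e}" "ends g = ends e" by (simp_all add: assms(4))
  then have ge: "usp V E ends \<le> usp V (E - {e}) ends"
    by (rule usp_le_usp_delete_parallel_edge[OF V])
  have eq: "usp V (E - {e}) ends = usp V E ends" if "card {f \<in> E. ends f = {v, w}} \<ge> 3"
  proof -
    have "2 \<le> card ?parallel" using card_Diff_singleton_ge[OF e] that by simp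
    then obtain g g' where "g \<in> ?parallel" "g' \<in> ?parallel" "g \<noteq> g'"
      by (rule card_ge_2_obtain_distinct)
    then have "g \<in> E - {e}" "g' \<in> E - {e}" "g \<noteq> g'" "ends g = ends e" "ends g' = ends e"
      by (simp_all add: assms(4))
    then have "usp V (E - {e}) ends \<le> usp V E ends"
      by (rule usp_delete_parallel_edge_le_usp[OF V])
    with ge show ?thesis by simp
  qed
  have "sp V (E - {e}) ends \<le> sp V E ends" unfolding sp_def using ge by (rule diff_le_mono2)
  with ge eq show ?thesis unfolding sp_def by simp
qed

end
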